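(* Let $A,B\in\mathbb{R}$ and let $f=f_1+f_2\mathbf{j}$ on $\mathbb{H}\cong\mathbb{C}^2$ with $f_1=z_1+\overline z_1+z_2+\overline z_2+A$ and $f_2=-z_1-\overline z_1+z_2+\overline z_2+B$. Then $f$ is hyperholomorphic, and its right inverse $f^{-1}$ is hyperholomorphic outside the zero set of $f$. Moreover, for $A=B=0$, the zero set of $f$ is $\{x_1=0,\ x_2=0\}\subset\mathbb{R}^4$, where $z_k=x_k+iy_k$ with $x_k,y_k\in\mathbb{R}$.
   Context: Quaternions are written $q=z_1+z_2\mathbf{j}$ with $z_1,z_2\in\mathbb{C}$, $\mathbf{j}^2=-1$, $z\mathbf{j}=\mathbf{j}\overline z$ for $z\in\mathbb{C}$. A function $f:U\to\mathbb{H}$ is written $f=f_1+f_2\mathbf{j}$ with $f_1,f_2$ complex valued. The right inverse of $f$ is $f^{-1}=(|f_1|^2+|f_2|^2)^{-1}(\overline f_1-f_2\mathbf{j})$, defined where $f\neq0$. The modified Cauchy–Fueter operator is $\mathcal{D}f=\frac12\big(\frac{\partial f_1}{\partial\overline z_1}-\frac{\partial\overline f_2}{\partial z_2}\big)+\mathbf{j}\,\frac12\big(\frac{\partial f_1}{\partial\overline z_2}+\frac{\partial\overline f_2}{\partial z_1}\big)$, and $f$ is hyperholomorphic if $\mathcal{D}f=0$. *)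

theory Defs
  imports "HOL-Analysis.Analysis"
begin

text \<open>Quaternions q = z1 + z2 j are represented by the pair (z1, z2) of complex numbers;
  points of H = C^2 are pairs (z1, z2).  A quaternion-valued function f = f1 + f2 j is
  represented by its two complex components f1 f2 :: complex \<times> complex \<Rightarrow> complex.\<close>

type_synonym C2 = "complex \<times> complex"

definition dirderiv :: "(C2 \<Rightarrow> complex) \<Rightarrow> C2 \<Rightarrow> C2 \<Rightarrow> complex" where
  "dirderiv g p v = vector_derivative (\<lambda>t::real. g (p + t *\<^sub>R v)) (at 0)"

definition dz1 :: "(C2 \<Rightarrow> complex) \<Rightarrow> C2 \<Rightarrow> complex" where
  "dz1 g p = (dirderiv g p (1, 0) - \<i> * dirderiv g p (\<i>, 0)) / 2"
definition dz2 :: "(C2 \<Rightarrow> complex) \<Rightarrow> C2 \<Rightarrow> complex" where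
  "dz2 g p = (dirderiv g p (0, 1) - \<i> * dirderiv g p (0, \<i>)) / 2"
definition dzbar1 :: "(C2 \<Rightarrow> complex) \<Rightarrow> C2 \<Rightarrow> complex" where
  "dzbar1 g p = (dirderiv g p (1, 0) + \<i> * dirderiv g p (\<i>, 0)) / 2"
definition dzbar2 :: "(C2 \<Rightarrow> complex) \<Rightarrow> C2 \<Rightarrow> complex" where
  "dzbar2 g p = (dirderiv g p (0, 1) + \<i> * dirderiv g p (0, \<i>)) / 2"

text \<open>Modified Cauchy--Fueter operator, D f = (first component) + j (second component);
  returned as the pair of the two complex components.\<close>
definition CF :: "(C2 \<Rightarrow> complex) \<Rightarrow> (C2 \<Rightarrow> complex) \<Rightarrow> C2 \<Rightarrow> complex \<times> complex" where
  "CF f1 f2 p =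
     ((dzbar1 f1 p - dz2 (\<lambda>q. cnj (f2 q)) p) / 2,
      (dzbar2 f1 p + dz1 (\<lambda>q. cnj (f2 q)) p) / 2)"

definition hyperholomorphic_on :: "(C2 \<Rightarrow> complex) \<Rightarrow> (C2 \<Rightarrow> complex) \<Rightarrow> C2 set \<Rightarrow> bool" where
  "hyperholomorphic_on f1 f2 U \<longleftrightarrow>
     open U \<and> (\<forall>p\<in>U. f1 differentiable (at p) \<and> f2 differentiable (at p) \<and> CF f1 f2 p = (0, 0))"

text \<open>Right inverse f^{-1} = (|f1|^2+|f2|^2)^{-1} (conj f1 - f2 j), components.\<close>
definition rinv1 :: "(C2 \<Rightarrow> complex) \<Rightarrow> (C2 \<Rightarrow> complex) \<Rightarrow> C2 \<Rightarrow> complex" where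
  "rinv1 f1 f2 p = cnj (f1 p) / complex_of_real ((cmod (f1 p))\<^sup>2 + (cmod (f2 p))\<^sup>2)"
definition rinv2 :: "(C2 \<Rightarrow> complex) \<Rightarrow> (C2 \<Rightarrow> complex) \<Rightarrow> C2 \<Rightarrow> complex" where
  "rinv2 f1 f2 p = - f2 p / complex_of_real ((cmod (f1 p))\<^sup>2 + (cmod (f2 p))\<^sup>2)"

definition zero_set :: "(C2 \<Rightarrow> complex) \<Rightarrow> (C2 \<Rightarrow> complex) \<Rightarrow> C2 set" where
  "zero_set f1 f2 = {p. f1 p = 0 \<and> f2 p = 0}"

end

theory Submission
  imports Defs
begin

text \<open>Both components of f are real-valued and depend only on x1 = Re z1 and x2 = Re z2.
  For such a pair the operator D reduces to (1/4) times the Cauchy--Riemann expressions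
  of f1 + i f2 in the variable w = x1 + i x2, so f1 + i f2 holomorphic in w makes f
  hyperholomorphic.  Here f1 + i f2 = (2 - 2i) w + (A + iB), and the components of the
  right inverse are exactly the real and imaginary parts of 1/(f1 + i f2), which is
  holomorphic off its poles.\<close>

definition real_plane :: "C2 \<Rightarrow> complex" where
  "real_plane q = Complex (Re (fst q)) (Re (snd q))"

lemma real_plane_add_scaleR: "real_plane (p + t *\<^sub>R v) = real_plane p + of_real t * real_plane v"
  by (simp add: real_plane_def complex_eq_iff)

lemma bounded_linear_real_plane: "bounded_linear real_plane"
proof -
  have "real_plane = (\<lambda>q. of_real (Re (fst q)) + \<i> * of_real (Re (snd q)))"
    by (auto simp: real_plane_def complex_eq_iff)
  show ?thesis
    unfolding \<open>real_plane = _\<close>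
    by (intro bounded_linear_intros bounded_linear_fst bounded_linear_snd
        bounded_linear_compose[OF bounded_linear_of_real bounded_linear_compose[OF bounded_linear_Re]])
qed

lemma dirderiv_real_plane_lift:
  assumes L: "bounded_linear L" and h: "(h has_field_derivative h') (at (real_plane p))"
  shows "dirderiv (\<lambda>q. complex_of_real (L (h (real_plane q)))) p v
           = of_real (L (h' * real_plane v))"
proof -
  have "((\<lambda>t. real_plane p + of_real t * real_plane v) has_vector_derivative real_plane v) (at 0)"
    by (auto intro!: derivative_eq_intros)
  from field_vector_diff_chain_at[OF this] h
  have "((\<lambda>t. h (real_plane (p + t *\<^sub>R v))) has_vector_derivative real_plane v * h') (at 0)"
    by (simp add: o_def real_plane_add_scaleR)
  from bounded_linear.has_vector_derivative[OF bounded_linear_compose[OF bounded_linear_of_real L] this]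
  show ?thesis
    unfolding dirderiv_def by (intro vector_derivative_at) (simp add: mult.commute)
qed

lemma differentiable_real_plane_lift:
  assumes "bounded_linear L" and "h field_differentiable (at (real_plane p))"
  shows "(\<lambda>q. complex_of_real (L (h (real_plane q)))) differentiable (at p)"
proof -
  have "h differentiable (at (real_plane p))"
    using assms(2) by (rule field_differentiable_imp_differentiable)
  with bounded_linear_imp_differentiable[OF bounded_linear_real_plane]
  have "(h \<circ> real_plane) differentiable (at p)"
    by (rule differentiable_chain_at)
  from differentiable_chain_at[OF this bounded_linear_imp_differentiable[OF
        bounded_linear_compose[OF bounded_linear_of_real assms(1)]]]
  show ?thesis by (simp add: o_def)
qed

lemma hyperholomorphic_on_real_plane_lift:
  assumes "open S" and "h holomorphic_on S"
  shows "hyperholomorphic_on (\<lambda>q. of_real (Re (h (real_plane q))))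
           (\<lambda>q. of_real (Im (h (real_plane q)))) (real_plane -` S)"
  unfolding hyperholomorphic_on_def
proof (intro conjI ballI)
  show "open (real_plane -` S)"
    using assms(1) bounded_linear_real_plane
    by (intro continuous_open_vimage linear_continuous_at)
  fix p assume "p \<in> real_plane -` S"
  then have hp: "h field_differentiable (at (real_plane p))"
    using assms holomorphic_on_imp_differentiable_at by blast
  then show "(\<lambda>q. complex_of_real (Re (h (real_plane q)))) differentiable (at p)"
    and "(\<lambda>q. complex_of_real (Im (h (real_plane q)))) differentiable (at p)"
    by (simp_all add: differentiable_real_plane_lift bounded_linear_Re bounded_linear_Im)
  have h': "(h has_field_derivative deriv h (real_plane p)) (at (real_plane p))"
    using hp by (simp add: field_differentiable_derivI)
  show "CF (\<lambda>q. of_real (Re (h (real_plane q)))) (\<lambda>q. of_real (Im (h (real_plane q)))) p = (0, 0)"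
    unfolding CF_def dzbar1_def dzbar2_def dz1_def dz2_def complex_cnj_complex_of_real
      dirderiv_real_plane_lift[OF bounded_linear_Re h'] dirderiv_real_plane_lift[OF bounded_linear_Im h']
    by (simp add: real_plane_def)
qed

lemma rinv1_Re_Im: "rinv1 (\<lambda>q. of_real (Re (g q))) (\<lambda>q. of_real (Im (g q))) = (\<lambda>q. of_real (Re (inverse (g q))))"
  by (simp add: rinv1_def fun_eq_iff Re_inverse cmod_power2)

lemma rinv2_Re_Im: "rinv2 (\<lambda>q. of_real (Re (g q))) (\<lambda>q. of_real (Im (g q))) = (\<lambda>q. of_real (Im (inverse (g q))))"
  by (simp add: rinv2_def fun_eq_iff Im_inverse cmod_power2)

lemma zero_set_Re_Im: "zero_set (\<lambda>q. of_real (Re (g q))) (\<lambda>q. of_real (Im (g q))) = {q. g q = 0}"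
  by (simp add: zero_set_def complex_eq_iff)

theorem proposition3p3:
  fixes A B :: real
  defines "f1 \<equiv> (\<lambda>(z1, z2). z1 + cnj z1 + z2 + cnj z2 + complex_of_real A)"
    and "f2 \<equiv> (\<lambda>(z1, z2). - z1 - cnj z1 + z2 + cnj z2 + complex_of_real B)"
  shows "hyperholomorphic_on f1 f2 UNIV
         \<and> hyperholomorphic_on (rinv1 f1 f2) (rinv2 f1 f2) (- zero_set f1 f2)
         \<and> (A = 0 \<and> B = 0 \<longrightarrow> zero_set f1 f2 = {(z1, z2). Re z1 = 0 \<and> Re z2 = 0})"
proof -
  define h where "h w = (2 - 2 * \<i>) * w + Complex A B" for w
  have f1: "f1 = (\<lambda>q. of_real (Re (h (real_plane q))))"
    and f2: "f2 = (\<lambda>q. of_real (Im (h (real_plane q))))"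
    by (auto simp: f1_def f2_def h_def real_plane_def complex_eq_iff)
  have h_holo: "h holomorphic_on UNIV"
    unfolding h_def by (intro holomorphic_intros)
  have nonzeros_open: "open {w. h w \<noteq> 0}"
    using holomorphic_on_imp_continuous_on[OF h_holo] by (rule open_Collect_neq) simp
  have inverse_holo: "(\<lambda>w. inverse (h w)) holomorphic_on {w. h w \<noteq> 0}"
    by (intro holomorphic_intros holomorphic_on_subset[OF h_holo]) auto
  have zeros: "zero_set f1 f2 = real_plane -` {w. h w = 0}"
    unfolding f1 f2 zero_set_Re_Im by auto
  have "hyperholomorphic_on f1 f2 (real_plane -` UNIV)"
    unfolding f1 f2 using open_UNIV h_holo by (rule hyperholomorphic_on_real_plane_lift)
  moreover have "hyperholomorphic_on (rinv1 f1 f2) (rinv2 f1 f2) (real_plane -` {w. h w \<noteq> 0})"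
    unfolding f1 f2 rinv1_Re_Im rinv2_Re_Im using nonzeros_open inverse_holo
    by (rule hyperholomorphic_on_real_plane_lift)
  moreover have "- zero_set f1 f2 = real_plane -` {w. h w \<noteq> 0}"
    by (auto simp: zeros)
  moreover have "zero_set f1 f2 = {(z1, z2). Re z1 = 0 \<and> Re z2 = 0}" if "A = 0" "B = 0"
  proof -
    have "h w = 0 \<longleftrightarrow> w = 0" for w
      using that by (auto simp: h_def complex_eq_iff)
    then have "zero_set f1 f2 = real_plane -` {0}"
      by (simp add: zeros)
    then show ?thesis
      by (auto simp: real_plane_def complex_eq_iff)
  qed
  ultimately show ?thesis
    by simp
qed

end
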